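(* Consider the client selection problem and the COCS policy described in the context, run with $K(t)=t^{z}\log(t)$ and $h_T=\lceil T^{\gamma}\rceil$, where $0<z<1$ and $0<\gamma<\frac12$. Suppose the Hölder condition holds with constants $L>0,\alpha>0$, and suppose there are a function $H$ with $H(t)>\frac{NMB}{c^{\min}}t^{-z/2}$ and constants $A>0$, $\theta<0$ such that for all $t$, $$2H(t)+\frac{2NMB}{c^{\min}}L2^{\alpha/2}h_T^{-\alpha}\le At^{\theta}.$$ Then $$\mathbb{E}[R(T)]\le \frac{4N^2MB}{c^{\min}}\left(T^{z+2\gamma}\log(T)+T^{2\gamma}\right)+\frac{NMB}{c^{\min}}\Big(\sum_{k=1}^{B/c^{\min}}\binom{N}{k}\Big)\frac{\pi^2}{3}+\frac{3NMB}{c^{\min}}L2^{\alpha/2}T^{1-\gamma\alpha}+\frac{A}{1+\theta}T^{1+\theta},$$ where $c^{\min}=\min_{n,t}c_n(y_n^t)$.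
   Context: Setting. There are $N$ clients indexed by $\mathcal N=\{1,\dots,N\}$, $M$ edge servers (ESs) indexed by $\mathcal M=\{1,\dots,M\}$, and rounds $t=1,\dots,T$. In round $t$, ES $m$ can communicate with a set $\mathcal N_m^t\subseteq\mathcal N$ of clients (these sets may overlap). Each client $n$ reveals computation resources $y_n^t$ and charges a cost $c_n(y_n^t)>0$, with $c_n$ nondecreasing; $c^{\min}=\min_{n,t}c_n(y_n^t)$. Each ES has budget $B>0$. A feasible client selection decision in round $t$ is $\bm s^t=(\bm s_1^t,\dots,\bm s_M^t)$ with $\bm s_m^t\subseteq\mathcal N_m^t$, $\sum_{n\in\bm s_m^t}c_n(y_n^t)\le B$ for every $m$, and $\bm s_m^t\cap\bm s_{m'}^t=\emptyset$ for $m\neq m'$. Each client-ES pair $(n,m)$ with $n\in\mathcal N_m^t$ has an observed context $\phi_{n,m}^t\in\Phi=[0,1]^2$. If client $n$ is selected by ES $m$ in round $t$, its participation indicator $X_{n,m}^t\in\{0,1\}$ is Bernoulli with mean $p_{n,m}(\phi_{n,m}^t)$, where $p_{n,m}:\Phi\to[0,1]$ is unknown. The utility is $\mu(\bm s^t;\bm X^t)=\frac1M\sum_{m\in\mathcal M}\sum_{n\in\bm s_m^t}X_{n,m}^t$ (and $\mu(\bm s;\bm p^t)$ is the same with $p_{n,m}(\phi^t_{n,m})$ in place of $X^t_{n,m}$). The oracle decision $\bm s^{\mathrm{opt},t}$ maximizes $\mu(\bm s;\bm p^t)$ over feasible decisions. The expected regret of the policy choosing $\bm s^1,\dots,\bm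 s^T$ is $\mathbb E[R(T)]=\sum_{t=1}^T(\mathbb E[\mu(\bm s^{\mathrm{opt},t};\bm X^t)]-\mathbb E[\mu(\bm s^t;\bm X^t)])$. Hölder condition: there exist $L>0,\alpha>0$ with $|p_{n,m}(\phi)-p_{n,m}(\phi')|\le L\|\phi-\phi'\|^{\alpha}$ for all $\phi,\phi'\in\Phi$ and all pairs $(n,m)$ (Euclidean norm). COCS policy (inputs: increasing function $K$, integer $h_T$). Partition $\Phi$ into $h_T^2$ squares of side $1/h_T$. For each pair $(n,m)$ and square $l$ keep a counter $C_{n,m}(l)$ (initially $0$) and an estimate $\hat p_{n,m}(l)$ equal to the sample mean of indicators observed when $n$ was selected by $m$ with context in $l$. In round $t$: observe contexts, let $l^t_{n,m}$ be the square containing $\phi^t_{n,m}$, set $\hat X^t_{n,m}=\hat p_{n,m}(l^t_{n,m})$; a pair is under-explored if $C_{n,m}(l^t_{n,m})\le K(t)$. If an under-explored pair exists (exploration round), select a feasible decision that first maximizes the number of selected under-explored clients and then spends remaining per-ES budget on explored clients maximizing $\mu(\cdot;\hat{\bm X}^t)$. Otherwise (exploitation round), select a feasible $\bm s^t$ maximizing $\mu(\bm s;\hat{\bm X}^t)$. At the end of the round, for each selected pair observe $X^t_{n,m}$ and update $\hat p_{n,m}(l^t_{n,m})$ (running mean) and $C_{n,m}(l^t_{n,m})$ (increment). *)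

theory Defs
  imports "HOL-Analysis.Analysis" "HOL-Probability.Probability"
begin

text \<open>Clients are 1..N, edge servers 1..M, rounds 1..T.
  A decision is a function s :: nat => nat set, s m = clients selected by ES m.
  Nb m t = clients ES m can reach in round t; cost n t = c_n(y_n^t).\<close>

type_synonym decision = "nat \<Rightarrow> nat set"

definition Phi :: "(real \<times> real) set" where
  "Phi = {0..1} \<times> {0..1}"

definition feasible ::
  "nat \<Rightarrow> (nat \<Rightarrow> nat \<Rightarrow> nat set) \<Rightarrow> (nat \<Rightarrow> nat \<Rightarrow> real) \<Rightarrow> real \<Rightarrow> nat \<Rightarrow> decision \<Rightarrow> bool"
where
  "feasible M Nb cost B t s \<longleftrightarrow>
     (\<forall>m. m \<notin> {1..M} \<longrightarrow> s m = {}) \<and>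
     (\<forall>m\<in>{1..M}. s m \<subseteq> Nb m t \<and> (\<Sum>n\<in>s m. cost n t) \<le> B) \<and>
     (\<forall>m\<in>{1..M}. \<forall>m'\<in>{1..M}. m \<noteq> m' \<longrightarrow> s m \<inter> s m' = {})"

definition util :: "nat \<Rightarrow> decision \<Rightarrow> (nat \<Rightarrow> nat \<Rightarrow> real) \<Rightarrow> real" where
  "util M s q = (1 / real M) * (\<Sum>m=1..M. \<Sum>n\<in>s m. q n m)"

text \<open>Boundary points are assigned to the square with the
  larger index (except at coordinate 1, assigned to index h-1).\<close>
definition cell :: "nat \<Rightarrow> real \<Rightarrow> nat" where
  "cell h x = min (nat \<lfloor>x * real h\<rfloor>) (h - 1)"

definition square :: "nat \<Rightarrow> real \<times> real \<Rightarrow> nat \<times> nat" where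
  "square h \<phi> = (cell h (fst \<phi>), cell h (snd \<phi>))"

text \<open>Outcome omega (t,n,m) = participation indicator X^t_{n,m}.
  A history hs is the list of past decisions: hs ! i is the decision of round i+1.\<close>
definition obs_rounds ::
  "(nat \<Rightarrow> nat \<Rightarrow> nat \<Rightarrow> real \<times> real) \<Rightarrow> nat \<Rightarrow> decision list \<Rightarrow> nat \<Rightarrow> nat \<Rightarrow> nat \<times> nat \<Rightarrow> nat set"
where
  "obs_rounds phi h hs n m l =
     {i. i < length hs \<and> n \<in> (hs ! i) m \<and> square h (phi n m (Suc i)) = l}"

definition counter ::
  "(nat \<Rightarrow> nat \<Rightarrow> nat \<Rightarrow> real \<times> real) \<Rightarrow> nat \<Rightarrow> decision list \<Rightarrow> nat \<Rightarrow> nat \<Rightarrow> nat \<times> nat \<Rightarrow> nat"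
where
  "counter phi h hs n m l = card (obs_rounds phi h hs n m l)"

text \<open>Estimate hat p_{n,m}(l): sample mean of observed indicators (0 if no sample).\<close>
definition estimate ::
  "(nat \<Rightarrow> nat \<Rightarrow> nat \<Rightarrow> real \<times> real) \<Rightarrow> nat \<Rightarrow> (nat \<times> nat \<times> nat \<Rightarrow> bool) \<Rightarrow> decision list
     \<Rightarrow> nat \<Rightarrow> nat \<Rightarrow> nat \<times> nat \<Rightarrow> real"
where
  "estimate phi h \<omega> hs n m l =
     (\<Sum>i\<in>obs_rounds phi h hs n m l. of_bool (\<omega> (Suc i, n, m))) / real (counter phi h hs n m l)"

definition cocs_rule ::
  "nat \<Rightarrow> (nat \<Rightarrow> nat \<Rightarrow> nat set) \<Rightarrow> (nat \<Rightarrow> nat \<Rightarrow> real) \<Rightarrow> real \<Rightarrow>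
   (nat \<Rightarrow> nat \<Rightarrow> nat \<Rightarrow> real \<times> real) \<Rightarrow> nat \<Rightarrow> (real \<Rightarrow> real) \<Rightarrow> nat \<Rightarrow>
   (nat \<Rightarrow> nat \<Rightarrow> nat \<times> nat \<Rightarrow> nat) \<Rightarrow> (nat \<Rightarrow> nat \<Rightarrow> nat \<times> nat \<Rightarrow> real) \<Rightarrow> decision \<Rightarrow> bool"
where
  "cocs_rule M Nb cost B phi h K t C P s \<longleftrightarrow>
     (let UE = (\<lambda>m. {n \<in> Nb m t. real (C n m (square h (phi n m t))) \<le> K (real t)});
          Xh = (\<lambda>n m. P n m (square h (phi n m t)));
          nUE = (\<lambda>s'. \<Sum>m=1..M. card (s' m \<inter> UE m))
      in feasible M Nb cost B t s \<and>
         (if (\<exists>m\<in>{1..M}. UE m \<noteq> {}) then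
            (\<forall>s'. feasible M Nb cost B t s' \<longrightarrow> nUE s' \<le> nUE s) \<and>
            (\<forall>s'. feasible M Nb cost B t s' \<and> (\<forall>m\<in>{1..M}. s' m \<inter> UE m = s m \<inter> UE m) \<longrightarrow>
                  util M (\<lambda>m. s' m - UE m) Xh \<le> util M (\<lambda>m. s m - UE m) Xh)
          else
            (\<forall>s'. feasible M Nb cost B t s' \<longrightarrow> util M s' Xh \<le> util M s Xh)))"

text \<open>Running the policy: sel t C P is the decision taken in round t given the
  current counters and estimates.\<close>
primrec history ::
  "(nat \<Rightarrow> (nat \<Rightarrow> nat \<Rightarrow> nat \<times> nat \<Rightarrow> nat) \<Rightarrow> (nat \<Rightarrow> nat \<Rightarrow> nat \<times> nat \<Rightarrow> real) \<Rightarrow> decision) \<Rightarrow>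
   (nat \<Rightarrow> nat \<Rightarrow> nat \<Rightarrow> real \<times> real) \<Rightarrow> nat \<Rightarrow> (nat \<times> nat \<times> nat \<Rightarrow> bool) \<Rightarrow> nat \<Rightarrow> decision list"
where
  "history sel phi h \<omega> 0 = []"
| "history sel phi h \<omega> (Suc k) =
     history sel phi h \<omega> k @
       [sel (Suc k) (counter phi h (history sel phi h \<omega> k))
                       (estimate phi h \<omega> (history sel phi h \<omega> k))]"

definition policy_dec ::
  "(nat \<Rightarrow> (nat \<Rightarrow> nat \<Rightarrow> nat \<times> nat \<Rightarrow> nat) \<Rightarrow> (nat \<Rightarrow> nat \<Rightarrow> nat \<times> nat \<Rightarrow> real) \<Rightarrow> decision) \<Rightarrow>
   (nat \<Rightarrow> nat \<Rightarrow> nat \<Rightarrow> real \<times> real) \<Rightarrow> nat \<Rightarrow> (nat \<times> nat \<times> nat \<Rightarrow> bool) \<Rightarrow> nat \<Rightarrow> decision"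
where
  "policy_dec sel phi h \<omega> t =
     sel t (counter phi h (history sel phi h \<omega> (t - 1)))
              (estimate phi h \<omega> (history sel phi h \<omega> (t - 1)))"

definition outcome_pmf ::
  "nat \<Rightarrow> nat \<Rightarrow> nat \<Rightarrow> (nat \<Rightarrow> nat \<Rightarrow> real \<times> real \<Rightarrow> real) \<Rightarrow> (nat \<Rightarrow> nat \<Rightarrow> nat \<Rightarrow> real \<times> real)
     \<Rightarrow> (nat \<times> nat \<times> nat \<Rightarrow> bool) pmf"
where
  "outcome_pmf N M T p phi =
     Pi_pmf ({1..T} \<times> {1..N} \<times> {1..M}) False
       (\<lambda>(t, n, m). bernoulli_pmf (p n m (phi n m t)))"

definition Xvec :: "(nat \<times> nat \<times> nat \<Rightarrow> bool) \<Rightarrow> nat \<Rightarrow> nat \<Rightarrow> nat \<Rightarrow> real" where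
  "Xvec \<omega> t n m = of_bool (\<omega> (t, n, m))"

end

theory Submission
  imports Defs
begin

(* In a round where COCS selects an under-explored pair the regret is at most N.  Each such
   round increments a counter C_{n,m}(l) that is still at most K(T), so the counters code these
   rounds injectively and there are at most N M h_T^2 (K(T) + 1) of them.  In every other round
   both the COCS decision and the optimal one use explored pairs only, and COCS maximises the
   estimated utility, so the regret is at most twice the total estimation error on explored pairs.
   An estimate errs by the variation of p_{n,m} over its square, at most L 2^(alpha/2) h_T^(-alpha)
   by the Hoelder condition, plus the sampling deviation W/C.  Although the rounds in which a pair
   is sampled are chosen adaptively, W^2/C - ln(C+1)/2 is a supermartingale, so E[W^2/C] is at
   most ln(t)/2; on explored pairs C > t^z ln t, and AM-GM gives E|W/C| <= (3/4) t^(-z/2).  The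
   hypothesis on H turns the per-round error into A t^theta, which sums to at most
   A T^(1+theta)/(1+theta). *)

section \<open>Product distributions\<close>

lemma finite_set_Pi_pmf:
  fixes F :: "'a \<Rightarrow> 'b::finite pmf"
  assumes "finite I"
  shows "finite (set_pmf (Pi_pmf I d F))"
proof (rule finite_subset)
  show "set_pmf (Pi_pmf I d F) \<subseteq> PiE_dflt I d (\<lambda>_. UNIV)"
    using set_Pi_pmf_subset[OF assms, of d F] by (force simp: PiE_dflt_def)
qed (use assms in auto)

lemma integrable_Pi_pmf [simp, intro]:
  fixes F :: "'a \<Rightarrow> 'b::finite pmf" and f :: "('a \<Rightarrow> 'b) \<Rightarrow> real"
  shows "finite I \<Longrightarrow> integrable (measure_pmf (Pi_pmf I d F)) f"
  by (intro integrable_measure_pmf_finite finite_set_Pi_pmf)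

lemma expectation_Pi_pmf_split:
  fixes F :: "'a \<Rightarrow> 'b::finite pmf" and f :: "('a \<Rightarrow> 'b) \<Rightarrow> real"
  assumes I: "finite I" and j: "j \<in> I"
  shows "measure_pmf.expectation (Pi_pmf I d F) f =
    measure_pmf.expectation (Pi_pmf (I - {j}) d F)
       (\<lambda>g. measure_pmf.expectation (F j) (\<lambda>y. f (g(j := y))))"
proof -
  have I': "finite (I - {j})" using I by simp
  have "Pi_pmf I d F = Pi_pmf (insert j (I - {j})) d F" using j by (simp add: insert_absorb)
  also have "\<dots> = do {y \<leftarrow> F j; g \<leftarrow> Pi_pmf (I - {j}) d F; return_pmf (g(j := y))}"
    using I' by (rule Pi_pmf_insert') simp
  finally have "measure_pmf.expectation (Pi_pmf I d F) f =
      (\<Sum>y\<in>UNIV. pmf (F j) y *\<^sub>R measure_pmf.expectation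
         (map_pmf (\<lambda>g. g(j := y)) (Pi_pmf (I - {j}) d F)) f)"
    by (simp only: map_pmf_def) (rule pmf_expectation_bind; use finite_set_Pi_pmf[OF I'] in auto)
  also have "\<dots> = (\<Sum>y\<in>UNIV. pmf (F j) y *
      measure_pmf.expectation (Pi_pmf (I - {j}) d F) (\<lambda>g. f (g(j := y))))"
    by simp
  also have "\<dots> = measure_pmf.expectation (Pi_pmf (I - {j}) d F)
      (\<lambda>g. \<Sum>y\<in>UNIV. pmf (F j) y * f (g(j := y)))"
    using I' by (simp add: Bochner_Integration.integral_sum)
  also have "\<dots> = measure_pmf.expectation (Pi_pmf (I - {j}) d F)
      (\<lambda>g. measure_pmf.expectation (F j) (\<lambda>y. f (g(j := y))))"
    by (subst integral_measure_pmf[of UNIV]) auto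
  finally show ?thesis .
qed

lemma expectation_Pi_pmf_remove:
  fixes F :: "'a \<Rightarrow> 'b::finite pmf" and f :: "('a \<Rightarrow> 'b) \<Rightarrow> real"
  assumes "finite I" "j \<in> I" and "\<And>g y. f (g(j := y)) = f g"
  shows "measure_pmf.expectation (Pi_pmf I d F) f = measure_pmf.expectation (Pi_pmf (I - {j}) d F) f"
  using assms by (simp add: expectation_Pi_pmf_split)

lemma expectation_Pi_pmf_mult_bernoulli:
  fixes F :: "'a \<Rightarrow> bool pmf" and f :: "('a \<Rightarrow> bool) \<Rightarrow> real"
  assumes I: "finite I" and j: "j \<in> I" and f: "\<And>g y. f (g(j := y)) = f g"
    and Fj: "F j = bernoulli_pmf q" and q: "0 \<le> q" "q \<le> 1"
  shows "measure_pmf.expectation (Pi_pmf I d F) (\<lambda>\<omega>. f \<omega> * of_bool (\<omega> j)) =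
    measure_pmf.expectation (Pi_pmf I d F) f * q"
proof -
  have "measure_pmf.expectation (Pi_pmf I d F) (\<lambda>\<omega>. f \<omega> * of_bool (\<omega> j)) =
     measure_pmf.expectation (Pi_pmf (I - {j}) d F) (\<lambda>g. f g * q)"
    using I j by (simp add: expectation_Pi_pmf_split f Fj q)
  also have "\<dots> = measure_pmf.expectation (Pi_pmf I d F) f * q"
    using expectation_Pi_pmf_remove[OF I j f] by simp
  finally show ?thesis .
qed

section \<open>Histories of a policy\<close>

type_synonym outcome = "nat \<times> nat \<times> nat \<Rightarrow> bool"
type_synonym contexts = "nat \<Rightarrow> nat \<Rightarrow> nat \<Rightarrow> real \<times> real"
type_synonym selection =
  "nat \<Rightarrow> (nat \<Rightarrow> nat \<Rightarrow> nat \<times> nat \<Rightarrow> nat) \<Rightarrow> (nat \<Rightarrow> nat \<Rightarrow> nat \<times> nat \<Rightarrow> real) \<Rightarrow> decision"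

lemma length_history [simp]: "length (history sel phi h \<omega> k) = k"
  by (induction k) auto

lemma nth_history:
  "i < k \<Longrightarrow> history sel phi h \<omega> k ! i = policy_dec sel phi h \<omega> (Suc i)"
  by (induction k) (auto simp: nth_append policy_dec_def less_Suc_eq)

lemma obs_rounds_history:
  "obs_rounds phi h (history sel phi h \<omega> k) n m l =
     {i. i < k \<and> n \<in> policy_dec sel phi h \<omega> (Suc i) m \<and> square h (phi n m (Suc i)) = l}"
  by (auto simp: obs_rounds_def nth_history)

lemma finite_obs_rounds [simp]: "finite (obs_rounds phi h hs n m l)"
  by (rule finite_subset[of _ "{..<length hs}"]) (auto simp: obs_rounds_def)

lemma estimate_cong:
  assumes "\<And>i a b. 0 < i \<Longrightarrow> i \<le> length hs \<Longrightarrow> \<omega> (i, a, b) = \<omega>' (i, a, b)"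
  shows "estimate phi h \<omega> hs = estimate phi h \<omega>' hs"
  unfolding estimate_def using assms by (intro ext sum.cong arg_cong2[where f="(/)"]) (auto simp: obs_rounds_def)

lemma history_cong:
  "(\<And>i a b. 0 < i \<Longrightarrow> i \<le> k \<Longrightarrow> \<omega> (i, a, b) = \<omega>' (i, a, b)) \<Longrightarrow>
    history sel phi h \<omega> k = history sel phi h \<omega>' k"
proof (induction k)
  case (Suc k)
  then have "history sel phi h \<omega> k = history sel phi h \<omega>' k" by simp
  moreover have "estimate phi h \<omega> (history sel phi h \<omega> k) = estimate phi h \<omega>' (history sel phi h \<omega> k)"
    using Suc.prems by (intro estimate_cong) auto
  ultimately show ?case by simp
qed simp

lemma policy_dec_cong:
  assumes "\<And>i a b. 0 < i \<Longrightarrow> i < t \<Longrightarrow> \<omega> (i, a, b) = \<omega>' (i, a, b)"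
  shows "policy_dec sel phi h \<omega> t = policy_dec sel phi h \<omega>' t"
proof -
  have "history sel phi h \<omega> (t - 1) = history sel phi h \<omega>' (t - 1)"
    using assms by (intro history_cong) auto
  moreover have "estimate phi h \<omega> (history sel phi h \<omega> (t - 1)) = estimate phi h \<omega>' (history sel phi h \<omega> (t - 1))"
    using assms by (intro estimate_cong) auto
  ultimately show ?thesis unfolding policy_dec_def by simp
qed

lemma policy_dec_fun_upd:
  "t \<le> i \<Longrightarrow> policy_dec sel phi h (fun_upd \<omega> (i, n, m) y) t = policy_dec sel phi h \<omega> t"
  by (rule policy_dec_cong) auto

definition sample_count ::
  "selection \<Rightarrow> contexts \<Rightarrow> nat \<Rightarrow> nat \<Rightarrow> nat \<Rightarrow> nat \<times> nat \<Rightarrow> nat \<Rightarrow> outcome \<Rightarrow> real"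
where
  "sample_count sel phi h n m l k \<omega> = real (counter phi h (history sel phi h \<omega> k) n m l)"

definition sample_deviation ::
  "selection \<Rightarrow> contexts \<Rightarrow> nat \<Rightarrow> (nat \<Rightarrow> real) \<Rightarrow> nat \<Rightarrow> nat \<Rightarrow> nat \<times> nat \<Rightarrow> nat \<Rightarrow> outcome \<Rightarrow> real"
where
  "sample_deviation sel phi h q n m l k \<omega> =
     (\<Sum>i\<in>obs_rounds phi h (history sel phi h \<omega> k) n m l. of_bool (\<omega> (Suc i, n, m)) - q (Suc i))"

lemma obs_rounds_history_Suc:
  "obs_rounds phi h (history sel phi h \<omega> (Suc k)) n m l =
    obs_rounds phi h (history sel phi h \<omega> k) n m l \<union>
    {i. i = k \<and> n \<in> policy_dec sel phi h \<omega> (Suc k) m \<and> square h (phi n m (Suc k)) = l}"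
  unfolding obs_rounds_history by (auto simp: less_Suc_eq)

lemma sample_count_Suc:
  "sample_count sel phi h n m l (Suc k) \<omega> = sample_count sel phi h n m l k \<omega> +
     of_bool (n \<in> policy_dec sel phi h \<omega> (Suc k) m \<and> square h (phi n m (Suc k)) = l)"
  unfolding sample_count_def counter_def obs_rounds_history_Suc
  by (subst card_Un_disjoint) (auto simp: obs_rounds_history)

lemma sample_deviation_Suc:
  "sample_deviation sel phi h q n m l (Suc k) \<omega> = sample_deviation sel phi h q n m l k \<omega> +
     of_bool (n \<in> policy_dec sel phi h \<omega> (Suc k) m \<and> square h (phi n m (Suc k)) = l) *
     (of_bool (\<omega> (Suc k, n, m)) - q (Suc k))"
  unfolding sample_deviation_def obs_rounds_history_Suc
  by (subst sum.union_disjoint) (auto simp: obs_rounds_history)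

lemma sample_deviation_eq_0:
  "sample_count sel phi h n m l k \<omega> = 0 \<Longrightarrow> sample_deviation sel phi h q n m l k \<omega> = 0"
  unfolding sample_count_def sample_deviation_def counter_def by simp

lemma sample_count_le: "sample_count sel phi h n m l k \<omega> \<le> real k"
proof -
  have "obs_rounds phi h (history sel phi h \<omega> k) n m l \<subseteq> {..<k}"
    by (auto simp: obs_rounds_history)
  then show ?thesis
    unfolding sample_count_def counter_def by (metis card_lessThan card_mono finite_lessThan of_nat_le_iff)
qed

lemma sample_count_fun_upd:
  "k < i \<Longrightarrow> sample_count sel phi h n m l k (fun_upd \<omega> (i, n', m') y) = sample_count sel phi h n m l k \<omega>"
  unfolding sample_count_def by (subst history_cong[where \<omega>'=\<omega>]) auto

lemma sample_deviation_fun_upd: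
  "k < i \<Longrightarrow> sample_deviation sel phi h q n m l k (fun_upd \<omega> (i, n', m') y) = sample_deviation sel phi h q n m l k \<omega>"
  unfolding sample_deviation_def
  by (subst history_cong[where \<omega>'=\<omega>]) (auto intro!: sum.cong simp: obs_rounds_history)

lemma counter_history_less:
  assumes t: "1 \<le> t" "t < t'" and n: "n \<in> policy_dec sel phi h \<omega> t m"
    and l: "square h (phi n m t) = l"
  shows "counter phi h (history sel phi h \<omega> (t - 1)) n m l < counter phi h (history sel phi h \<omega> (t' - 1)) n m l"
proof -
  let ?O = "\<lambda>k. obs_rounds phi h (history sel phi h \<omega> k) n m l"
  have "?O (t - 1) \<subseteq> ?O (t' - 1)" "t - 1 \<in> ?O (t' - 1)" "t - 1 \<notin> ?O (t - 1)"
    unfolding obs_rounds_history using t n l by auto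
  then have "?O (t - 1) \<subset> ?O (t' - 1)" by blast
  then show ?thesis unfolding counter_def by (intro psubset_card_mono finite_obs_rounds)
qed

section \<open>Concentration of the estimates\<close>

definition deviation_potential :: "real \<Rightarrow> real \<Rightarrow> real" where
  "deviation_potential w c = w\<^sup>2 / c - ln (c + 1) / 2"

(* The variance mu (1 - mu) <= 1/4 that a sample adds to w^2 is paid for by
   ln ((c + 2) / (c + 1)) >= 1 / (c + 2). *)
lemma deviation_potential_step:
  fixes w c \<mu> :: real
  assumes c: "c \<ge> 0" and cw: "c = 0 \<longrightarrow> w = 0" and \<mu>: "0 \<le> \<mu>" "\<mu> \<le> 1"
  shows "\<mu> * deviation_potential (w + (1 - \<mu>)) (c + 1) + (1 - \<mu>) * deviation_potential (w - \<mu>) (c + 1) \<le> deviation_potential w c"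
proof -
  have mean: "\<mu> * (w + (1 - \<mu>))\<^sup>2 + (1 - \<mu>) * (w - \<mu>)\<^sup>2 = w\<^sup>2 + \<mu> * (1 - \<mu>)"
    by (simp add: power2_eq_square algebra_simps)
  have "\<mu> * deviation_potential (w + (1 - \<mu>)) (c + 1) + (1 - \<mu>) * deviation_potential (w - \<mu>) (c + 1)
      = (\<mu> * (w + (1 - \<mu>))\<^sup>2 + (1 - \<mu>) * (w - \<mu>)\<^sup>2) / (c + 1) - ln (c + 2) / 2"
  proof -
    have "\<And>a b X. \<mu> * (a / (c + 1) - X) + (1 - \<mu>) * (b / (c + 1) - X) = (\<mu> * a + (1 - \<mu>) * b) / (c + 1) - X"
      by (simp add: algebra_simps add_divide_distrib diff_divide_distrib)
    moreover have "c + 1 + 1 = c + 2" by simp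
    ultimately show ?thesis unfolding deviation_potential_def by (simp add: add.commute)
  qed
  also have "\<dots> = w\<^sup>2 / (c + 1) + \<mu> * (1 - \<mu>) / (c + 1) - ln (c + 2) / 2"
    by (simp add: mean add_divide_distrib)
  also have "w\<^sup>2 / (c + 1) \<le> w\<^sup>2 / c"
    using c cw by (cases "c = 0") (auto intro: divide_left_mono)
  also have "\<mu> * (1 - \<mu>) / (c + 1) \<le> 1 / (2 * (c + 2))"
  proof -
    have "\<mu> * (1 - \<mu>) \<le> 1 / 4"
      using zero_le_power2[of "\<mu> - 1 / 2"] by (simp add: power2_eq_square algebra_simps)
    then have "\<mu> * (1 - \<mu>) / (c + 1) \<le> (1 / 4) / (c + 1)"
      using c by (intro divide_right_mono) auto
    also have "\<dots> \<le> 1 / (2 * (c + 2))" using c by (simp add: field_simps)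
    finally show ?thesis .
  qed
  also have "1 / (2 * (c + 2)) \<le> ln (c + 2) / 2 - ln (c + 1) / 2"
  proof -
    have "ln ((c + 1) / (c + 2)) \<le> (c + 1) / (c + 2) - 1"
      using c by (intro ln_le_minus_one) auto
    moreover have "ln ((c + 1) / (c + 2)) = ln (c + 1) - ln (c + 2)"
      using c by (simp add: ln_div)
    moreover have "(c + 1) / (c + 2) - 1 = - (2 * (1 / (2 * (c + 2))))"
      using c by (simp add: field_simps)
    ultimately show ?thesis by linarith
  qed
  finally show ?thesis unfolding deviation_potential_def by simp
qed

lemma abs_le_square_bound:
  fixes x a :: real
  assumes "a > 0"
  shows "\<bar>x\<bar> \<le> a * x\<^sup>2 + 1 / (4 * a)"
proof -
  have "0 \<le> a * (\<bar>x\<bar> - 1 / (2 * a))\<^sup>2" using assms by simp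
  also have "\<dots> = a * x\<^sup>2 - \<bar>x\<bar> + 1 / (4 * a)"
    using assms by (simp add: power2_eq_square field_simps)
  finally show ?thesis by linarith
qed

lemma abs_mean_le_deviation_bound:
  fixes W D C K a b :: real
  assumes K: "0 < K" "K < C" and D: "\<bar>D\<bar> \<le> C * b" and a: "0 < a"
  shows "\<bar>(W + D) / C\<bar> \<le> a / K * (W\<^sup>2 / C) + 1 / (4 * a) + b"
proof -
  have C: "C > 0" using K by simp
  have "\<bar>(W + D) / C\<bar> \<le> \<bar>W / C\<bar> + \<bar>D\<bar> / C"
    using C by (simp add: add_divide_distrib abs_triangle_ineq[THEN order_trans])
  moreover have "\<bar>D\<bar> / C \<le> b" using D C by (simp add: divide_le_eq mult.commute)
  moreover have "\<bar>W / C\<bar> \<le> a * (W / C)\<^sup>2 + 1 / (4 * a)" by (rule abs_le_square_bound[OF a])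
  moreover have "a * (W / C)\<^sup>2 \<le> a / K * (W\<^sup>2 / C)"
  proof -
    have "(W / C)\<^sup>2 = (W\<^sup>2 / C) * (1 / C)" by (simp add: power2_eq_square)
    also have "\<dots> \<le> (W\<^sup>2 / C) * (1 / K)"
      using K C by (intro mult_left_mono) (auto simp: divide_simps)
    also have "\<dots> = (W\<^sup>2 / C) / K" by simp
    finally have "a * (W / C)\<^sup>2 \<le> a * ((W\<^sup>2 / C) / K)"
      by (rule mult_left_mono) (use a in simp)
    also have "\<dots> = a / K * (W\<^sup>2 / C)" by simp
    finally show ?thesis .
  qed
  ultimately show ?thesis by linarith
qed

lemma deviation_potential_sample_step:
  assumes q: "0 \<le> q (Suc k)" "q (Suc k) \<le> 1"
  shows "measure_pmf.expectation (bernoulli_pmf (q (Suc k)))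
      (\<lambda>y. deviation_potential (sample_deviation sel phi h q n m l (Suc k) (g((Suc k, n, m) := y)))
        (sample_count sel phi h n m l (Suc k) (g((Suc k, n, m) := y))))
    \<le> deviation_potential (sample_deviation sel phi h q n m l k g) (sample_count sel phi h n m l k g)"
proof -
  define j where "j = (Suc k, n, m)"
  define C where "C = sample_count sel phi h n m l k"
  define W where "W = sample_deviation sel phi h q n m l k"
  define sampled where
    "sampled = (\<lambda>\<omega>. n \<in> policy_dec sel phi h \<omega> (Suc k) m \<and> square h (phi n m (Suc k)) = l)"
  have upd: "C (g(j := y)) = C g" "W (g(j := y)) = W g" "sampled (g(j := y)) = sampled g" for y
    unfolding C_def W_def sampled_def j_def
    by (simp_all add: sample_count_fun_upd sample_deviation_fun_upd policy_dec_fun_upd)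
  have "sample_count sel phi h n m l (Suc k) (g(j := y)) = C (g(j := y)) + of_bool (sampled (g(j := y)))"
    and "sample_deviation sel phi h q n m l (Suc k) (g(j := y)) =
           W (g(j := y)) + of_bool (sampled (g(j := y))) * (of_bool ((g(j := y)) (Suc k, n, m)) - q (Suc k))"
    for y unfolding C_def W_def sampled_def by (rule sample_count_Suc sample_deviation_Suc)+
  then have "sample_count sel phi h n m l (Suc k) (g(j := y)) = C g + of_bool (sampled g)"
    and "sample_deviation sel phi h q n m l (Suc k) (g(j := y)) =
           W g + of_bool (sampled g) * (of_bool y - q (Suc k))" for y
    by (simp_all only: j_def[symmetric] fun_upd_same upd)
  moreover have "q (Suc k) * deviation_potential (W g + (1 - q (Suc k))) (C g + 1)
      + (1 - q (Suc k)) * deviation_potential (W g - q (Suc k)) (C g + 1) \<le> deviation_potential (W g) (C g)"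
    using q sample_deviation_eq_0[of sel phi h n m l k g q]
    by (intro deviation_potential_step) (auto simp: C_def W_def sample_count_def)
  ultimately show ?thesis
    using q unfolding j_def C_def W_def
    by (cases "sampled g") (simp_all add: add.commute mult.commute)
qed

lemma expectation_deviation_potential_nonpos:
  fixes F :: "nat \<times> nat \<times> nat \<Rightarrow> bool pmf"
  assumes I: "finite I"
    and I_rounds: "\<And>i. i \<in> {1..T} \<Longrightarrow> (i, n, m) \<in> I"
    and F: "\<And>i. i \<in> {1..T} \<Longrightarrow> F (i, n, m) = bernoulli_pmf (q i)"
    and q: "\<And>i. i \<in> {1..T} \<Longrightarrow> 0 \<le> q i \<and> q i \<le> 1"
  shows "k \<le> T \<Longrightarrow> measure_pmf.expectation (Pi_pmf I d F)
     (\<lambda>\<omega>. deviation_potential (sample_deviation sel phi h q n m l k \<omega>) (sample_count sel phi h n m l k \<omega>)) \<le> 0"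
proof (induction k)
  case 0
  then show ?case
    by (simp add: deviation_potential_def sample_count_def sample_deviation_def counter_def obs_rounds_def)
next
  case (Suc k)
  define \<Psi> where "\<Psi> k' \<omega> = deviation_potential (sample_deviation sel phi h q n m l k' \<omega>)
      (sample_count sel phi h n m l k' \<omega>)" for k' \<omega>
  have j: "(Suc k, n, m) \<in> I" and Fk: "F (Suc k, n, m) = bernoulli_pmf (q (Suc k))"
    and qk: "0 \<le> q (Suc k)" "q (Suc k) \<le> 1"
    using I_rounds F q Suc.prems by auto
  have "measure_pmf.expectation (Pi_pmf I d F) (\<Psi> (Suc k))
     = measure_pmf.expectation (Pi_pmf (I - {(Suc k, n, m)}) d F)
         (\<lambda>g. measure_pmf.expectation (F (Suc k, n, m)) (\<lambda>y. \<Psi> (Suc k) (g((Suc k, n, m) := y))))"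
    by (rule expectation_Pi_pmf_split[OF I j])
  also have "\<dots> \<le> measure_pmf.expectation (Pi_pmf (I - {(Suc k, n, m)}) d F) (\<Psi> k)"
    unfolding Fk \<Psi>_def
    by (intro integral_mono deviation_potential_sample_step integrable_Pi_pmf) (use I qk in auto)
  also have "\<dots> = measure_pmf.expectation (Pi_pmf I d F) (\<Psi> k)"
    using I j unfolding \<Psi>_def
    by (intro expectation_Pi_pmf_remove[symmetric]) (simp_all add: sample_count_fun_upd sample_deviation_fun_upd)
  also have "\<dots> \<le> 0" using Suc unfolding \<Psi>_def by simp
  finally show ?case unfolding \<Psi>_def .
qed

lemma expectation_sq_deviation_div_count_le:
  fixes F :: "nat \<times> nat \<times> nat \<Rightarrow> bool pmf"
  assumes I: "finite I"
    and I_rounds: "\<And>i. i \<in> {1..T} \<Longrightarrow> (i, n, m) \<in> I"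
    and F: "\<And>i. i \<in> {1..T} \<Longrightarrow> F (i, n, m) = bernoulli_pmf (q i)"
    and q: "\<And>i. i \<in> {1..T} \<Longrightarrow> 0 \<le> q i \<and> q i \<le> 1"
    and k: "k \<le> T"
  shows "measure_pmf.expectation (Pi_pmf I d F)
     (\<lambda>\<omega>. (sample_deviation sel phi h q n m l k \<omega>)\<^sup>2 / sample_count sel phi h n m l k \<omega>) \<le> ln (real k + 1) / 2"
proof -
  let ?E = "measure_pmf.expectation (Pi_pmf I d F)"
  let ?C = "sample_count sel phi h n m l k" and ?W = "sample_deviation sel phi h q n m l k"
  have "?E (\<lambda>\<omega>. (?W \<omega>)\<^sup>2 / ?C \<omega>) = ?E (\<lambda>\<omega>. deviation_potential (?W \<omega>) (?C \<omega>) + ln (?C \<omega> + 1) / 2)"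
    unfolding deviation_potential_def by (simp only: diff_add_cancel)
  also have "\<dots> = ?E (\<lambda>\<omega>. deviation_potential (?W \<omega>) (?C \<omega>)) + ?E (\<lambda>\<omega>. ln (?C \<omega> + 1) / 2)"
    using I by (intro Bochner_Integration.integral_add integrable_Pi_pmf)
  finally have split: "?E (\<lambda>\<omega>. (?W \<omega>)\<^sup>2 / ?C \<omega>) =
      ?E (\<lambda>\<omega>. deviation_potential (?W \<omega>) (?C \<omega>)) + ?E (\<lambda>\<omega>. ln (?C \<omega> + 1) / 2)" .
  have "?E (\<lambda>\<omega>. deviation_potential (?W \<omega>) (?C \<omega>)) \<le> 0"
    using I I_rounds F q k by (rule expectation_deviation_potential_nonpos)
  moreover have "?E (\<lambda>\<omega>. ln (?C \<omega> + 1) / 2) \<le> ?E (\<lambda>\<omega>. ln (real k + 1) / 2)"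
  proof (rule integral_mono)
    fix \<omega>
    have "0 \<le> ?C \<omega>" "?C \<omega> \<le> real k"
      by (simp_all add: sample_count_le) (simp add: sample_count_def)
    then show "ln (?C \<omega> + 1) / 2 \<le> ln (real k + 1) / 2" by simp
  qed (use I in auto)
  ultimately show ?thesis unfolding split by simp
qed

lemma estimate_minus_eq:
  assumes "counter phi h hs n m l > 0"
  shows "estimate phi h \<omega> hs n m l - c =
    ((\<Sum>i\<in>obs_rounds phi h hs n m l. of_bool (\<omega> (Suc i, n, m)) - q (Suc i))
     + (\<Sum>i\<in>obs_rounds phi h hs n m l. q (Suc i) - c)) / real (counter phi h hs n m l)"
proof -
  have "obs_rounds phi h hs n m l \<noteq> {}" using assms unfolding counter_def by auto
  then show ?thesis
    by (simp add: estimate_def counter_def sum_subtractf sum.distrib diff_divide_distrib)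
qed

lemma explored_error_le:
  fixes K a b :: real
  assumes bias: "\<And>i. i \<in> {1..T} \<Longrightarrow> square h (phi n m i) = l \<Longrightarrow> \<bar>q i - q t\<bar> \<le> b"
    and t: "t \<in> {1..T}" and K: "0 < K" and a: "0 < a" and b: "0 \<le> b"
  shows "\<bar>estimate phi h \<omega> (history sel phi h \<omega> (t - 1)) n m l - q t\<bar> *
      of_bool (real (counter phi h (history sel phi h \<omega> (t - 1)) n m l) > K)
    \<le> a / K * ((sample_deviation sel phi h q n m l (t - 1) \<omega>)\<^sup>2 / sample_count sel phi h n m l (t - 1) \<omega>)
      + (1 / (4 * a) + b)"
proof (cases "K < sample_count sel phi h n m l (t - 1) \<omega>")
  case True
  let ?O = "obs_rounds phi h (history sel phi h \<omega> (t - 1)) n m l"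
  have "\<bar>\<Sum>i\<in>?O. q (Suc i) - q t\<bar> \<le> (\<Sum>i\<in>?O. \<bar>q (Suc i) - q t\<bar>)" by (rule sum_abs)
  also have "\<dots> \<le> (\<Sum>i\<in>?O. b)"
    using t by (intro sum_mono bias) (auto simp: obs_rounds_history)
  also have "\<dots> = sample_count sel phi h n m l (t - 1) \<omega> * b" by (simp add: sample_count_def counter_def)
  finally have "\<bar>\<Sum>i\<in>?O. q (Suc i) - q t\<bar> \<le> sample_count sel phi h n m l (t - 1) \<omega> * b" .
  from abs_mean_le_deviation_bound[OF K True this a] show ?thesis
    using True K estimate_minus_eq[of phi h "history sel phi h \<omega> (t - 1)" n m l \<omega> "q t" q]
    by (simp add: sample_count_def sample_deviation_def add.assoc)
next
  case False
  then show ?thesis using K a b by (simp add: sample_count_def)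
qed

lemma expectation_explored_error_le:
  fixes F :: "nat \<times> nat \<times> nat \<Rightarrow> bool pmf" and z b :: real
  assumes I: "finite I"
    and I_rounds: "\<And>i. i \<in> {1..T} \<Longrightarrow> (i, n, m) \<in> I"
    and F: "\<And>i. i \<in> {1..T} \<Longrightarrow> F (i, n, m) = bernoulli_pmf (q i)"
    and q: "\<And>i. i \<in> {1..T} \<Longrightarrow> 0 \<le> q i \<and> q i \<le> 1"
    and t: "t \<in> {1..T}"
    and bias: "\<And>i. i \<in> {1..T} \<Longrightarrow> square h (phi n m i) = l \<Longrightarrow> \<bar>q i - q t\<bar> \<le> b"
    and b: "b \<ge> 0" and z: "z > 0"
  shows "measure_pmf.expectation (Pi_pmf I d F)
     (\<lambda>\<omega>. \<bar>estimate phi h \<omega> (history sel phi h \<omega> (t - 1)) n m l - q t\<bar> *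
          of_bool (real (counter phi h (history sel phi h \<omega> (t - 1)) n m l) > real t powr z * ln (real t)))
     \<le> real t powr (- z / 2) + b"
proof (cases "t = 1")
  case True
  then show ?thesis using b by (simp add: counter_def obs_rounds_def)
next
  case False
  then have t2: "t \<ge> 2" using t by auto
  let ?E = "measure_pmf.expectation (Pi_pmf I d F)"
  define K where "K = real t powr z * ln (real t)"
  define a where "a = real t powr (z / 2)"
  define c where "c = a / K"
  define V where "V \<omega> = (sample_deviation sel phi h q n m l (t - 1) \<omega>)\<^sup>2 / sample_count sel phi h n m l (t - 1) \<omega>"
    for \<omega>
  have K: "K > 0" and a: "a > 0" and c: "c > 0" using t2 by (simp_all add: K_def a_def c_def)
  have "?E V \<le> ln (real (t - 1) + 1) / 2"
    unfolding V_def using I I_rounds F q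
    by (rule expectation_sq_deviation_div_count_le) (use t in auto)
  then have V: "?E V \<le> ln (real t) / 2" using t2 by (simp add: of_nat_diff)
  have "?E (\<lambda>\<omega>. \<bar>estimate phi h \<omega> (history sel phi h \<omega> (t - 1)) n m l - q t\<bar> *
      of_bool (real (counter phi h (history sel phi h \<omega> (t - 1)) n m l) > K))
      \<le> ?E (\<lambda>\<omega>. c * V \<omega> + (1 / (4 * a) + b))"
  proof (intro integral_mono integrable_Pi_pmf I)
    show "\<bar>estimate phi h \<omega> (history sel phi h \<omega> (t - 1)) n m l - q t\<bar> *
        of_bool (real (counter phi h (history sel phi h \<omega> (t - 1)) n m l) > K) \<le> c * V \<omega> + (1 / (4 * a) + b)"
      for \<omega> using bias t K a b unfolding c_def V_def by (rule explored_error_le)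
  qed
  also have "\<dots> = c * ?E V + (1 / (4 * a) + b)"
    using I by simp
  also have "\<dots> \<le> c * (ln (real t) / 2) + (1 / (4 * a) + b)"
    using c V by (simp add: mult_left_mono)
  also have "\<dots> = 3 / 4 * real t powr (- z / 2) + b"
  proof -
    have "c * (ln (real t) / 2) = real t powr (z / 2) / real t powr z / 2"
      using t2 by (simp add: c_def a_def K_def)
    also have "real t powr (z / 2) / real t powr z = real t powr (- z / 2)"
      by (simp add: powr_diff[symmetric])
    finally have "c * (ln (real t) / 2) = real t powr (- z / 2) / 2" .
    moreover have "1 / (4 * a) = real t powr (- z / 2) / 4"
      using t2 by (simp add: a_def powr_minus_divide)
    ultimately show ?thesis by simp
  qed
  finally show ?thesis unfolding K_def using powr_ge_zero[of "real t" "- z / 2"] by linarith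
qed

section \<open>One round of COCS\<close>

lemma util_cong: "(\<And>m. m \<in> {1..M} \<Longrightarrow> s m = s' m) \<Longrightarrow> util M s q = util M s' q"
  unfolding util_def by (metis (no_types, lifting) sum.cong)

lemma util_eq_sum_indicator:
  assumes "\<And>m. m \<in> {1..M} \<Longrightarrow> s m \<subseteq> {1..N}"
  shows "util M s q = 1 / real M * (\<Sum>m=1..M. \<Sum>n=1..N. of_bool (n \<in> s m) * q n m)"
  unfolding util_def
proof (rule arg_cong[where f="\<lambda>x. 1 / real M * x"], rule sum.cong[OF refl])
  fix m assume "m \<in> {1..M}"
  then have "(\<Sum>n\<in>s m. q n m) = (\<Sum>n\<in>{1..N} \<inter> s m. q n m)"
    using assms by (simp add: Int_absorb1)
  also have "\<dots> = (\<Sum>n=1..N. if n \<in> s m then q n m else 0)"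
    by (rule sum.inter_restrict) simp
  also have "\<dots> = (\<Sum>n=1..N. of_bool (n \<in> s m) * q n m)"
    by (intro sum.cong) auto
  finally show "(\<Sum>n\<in>s m. q n m) = (\<Sum>n=1..N. of_bool (n \<in> s m) * q n m)" .
qed

lemma util_nonneg:
  "(\<And>n m. m \<in> {1..M} \<Longrightarrow> n \<in> s m \<Longrightarrow> 0 \<le> q n m) \<Longrightarrow> 0 \<le> util M s q"
  unfolding util_def by (intro mult_nonneg_nonneg sum_nonneg) auto

lemma util_le:
  assumes "\<And>m. m \<in> {1..M} \<Longrightarrow> s m \<subseteq> {1..N}"
    and "\<And>n m. m \<in> {1..M} \<Longrightarrow> n \<in> s m \<Longrightarrow> q n m \<le> 1"
  shows "util M s q \<le> real N"
proof -
  have "(\<Sum>n\<in>s m. q n m) \<le> real N" if m: "m \<in> {1..M}" for m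
  proof -
    have "(\<Sum>n\<in>s m. q n m) \<le> real (card (s m))"
      using assms(2)[OF m] sum_mono[of "s m" "\<lambda>n. q n m" "\<lambda>_. 1"] by simp
    also have "card (s m) \<le> N" using card_mono[OF _ assms(1)[OF m]] by simp
    finally show ?thesis by simp
  qed
  then have "(\<Sum>m=1..M. \<Sum>n\<in>s m. q n m) \<le> real M * real N"
    using sum_mono[of "{1..M}" "\<lambda>m. \<Sum>n\<in>s m. q n m" "\<lambda>_. real N"] by simp
  then show ?thesis
    unfolding util_def by (cases "M = 0") (simp_all add: field_simps)
qed

lemma abs_util_diff_le:
  assumes "\<And>m. m \<in> {1..M} \<Longrightarrow> s m \<subseteq> {1..N}"
    and "\<And>n m. m \<in> {1..M} \<Longrightarrow> n \<in> s m \<Longrightarrow> \<bar>q n m - q' n m\<bar> \<le> e n m"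
    and "\<And>n m. m \<in> {1..M} \<Longrightarrow> n \<in> {1..N} \<Longrightarrow> 0 \<le> e n m"
  shows "\<bar>util M s q - util M s q'\<bar> \<le> 1 / real M * (\<Sum>m=1..M. \<Sum>n=1..N. e n m)"
proof -
  have inner: "\<bar>\<Sum>n\<in>s m. q n m - q' n m\<bar> \<le> (\<Sum>n=1..N. e n m)" if m: "m \<in> {1..M}" for m
  proof -
    have "\<bar>\<Sum>n\<in>s m. q n m - q' n m\<bar> \<le> (\<Sum>n\<in>s m. e n m)"
      using assms(2)[OF m] by (intro sum_abs[THEN order_trans] sum_mono) auto
    also have "\<dots> \<le> (\<Sum>n=1..N. e n m)"
      using assms(1,3)[OF m] by (intro sum_mono2) auto
    finally show ?thesis .
  qed
  have "\<bar>\<Sum>m=1..M. \<Sum>n\<in>s m. q n m - q' n m\<bar> \<le> (\<Sum>m=1..M. \<Sum>n=1..N. e n m)"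
    by (rule order_trans[OF sum_abs sum_mono]) (rule inner)
  moreover have "util M s q - util M s q' = 1 / real M * (\<Sum>m=1..M. \<Sum>n\<in>s m. q n m - q' n m)"
    unfolding util_def by (simp add: sum_subtractf right_diff_distrib)
  ultimately show ?thesis by (simp add: divide_right_mono)
qed

definition under_explored ::
  "(nat \<Rightarrow> nat \<Rightarrow> nat set) \<Rightarrow> contexts \<Rightarrow> nat \<Rightarrow> (real \<Rightarrow> real) \<Rightarrow> nat \<Rightarrow>
   (nat \<Rightarrow> nat \<Rightarrow> nat \<times> nat \<Rightarrow> nat) \<Rightarrow> nat \<Rightarrow> nat set"
where
  "under_explored Nb phi h K t C m = {n \<in> Nb m t. real (C n m (square h (phi n m t))) \<le> K (real t)}"

lemma cocs_rule_iff:
  "cocs_rule M Nb cost B phi h K t C P s \<longleftrightarrow>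
     feasible M Nb cost B t s \<and>
     (let UE = under_explored Nb phi h K t C; Xh = (\<lambda>n m. P n m (square h (phi n m t))) in
      if \<exists>m\<in>{1..M}. UE m \<noteq> {} then
        (\<forall>s'. feasible M Nb cost B t s' \<longrightarrow>
           (\<Sum>m=1..M. card (s' m \<inter> UE m)) \<le> (\<Sum>m=1..M. card (s m \<inter> UE m))) \<and>
        (\<forall>s'. feasible M Nb cost B t s' \<and> (\<forall>m\<in>{1..M}. s' m \<inter> UE m = s m \<inter> UE m) \<longrightarrow>
           util M (\<lambda>m. s' m - UE m) Xh \<le> util M (\<lambda>m. s m - UE m) Xh)
      else (\<forall>s'. feasible M Nb cost B t s' \<longrightarrow> util M s' Xh \<le> util M s Xh))"
  unfolding cocs_rule_def under_explored_def Let_def ..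

lemma feasible_subset: "feasible M Nb cost B t s \<Longrightarrow> m \<in> {1..M} \<Longrightarrow> s m \<subseteq> Nb m t"
  unfolding feasible_def by auto

lemma cocs_rule_explored_dominates:
  assumes rule: "cocs_rule M Nb cost B phi h K t C P s"
    and so: "feasible M Nb cost B t so"
    and Nb: "\<And>m. finite (Nb m t)"
    and s: "\<And>m. m \<in> {1..M} \<Longrightarrow> s m \<inter> under_explored Nb phi h K t C m = {}"
  shows "(\<forall>m\<in>{1..M}. so m \<inter> under_explored Nb phi h K t C m = {}) \<and>
    util M so (\<lambda>n m. P n m (square h (phi n m t))) \<le> util M s (\<lambda>n m. P n m (square h (phi n m t)))"
proof (cases "\<exists>m\<in>{1..M}. under_explored Nb phi h K t C m \<noteq> {}")
  case True
  let ?UE = "under_explored Nb phi h K t C" and ?Xh = "\<lambda>n m. P n m (square h (phi n m t))"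
  have "(\<Sum>m=1..M. card (so m \<inter> ?UE m)) \<le> (\<Sum>m=1..M. card (s m \<inter> ?UE m))"
    and dominates: "\<And>s'. feasible M Nb cost B t s' \<Longrightarrow> (\<forall>m\<in>{1..M}. s' m \<inter> ?UE m = s m \<inter> ?UE m) \<Longrightarrow>
       util M (\<lambda>m. s' m - ?UE m) ?Xh \<le> util M (\<lambda>m. s m - ?UE m) ?Xh"
    using rule so True unfolding cocs_rule_iff Let_def by auto
  then have "(\<Sum>m=1..M. card (so m \<inter> ?UE m)) = 0" using s by simp
  moreover have "finite (so m \<inter> ?UE m)" if "m \<in> {1..M}" for m
    using feasible_subset[OF so that] Nb by (meson finite_Int finite_subset)
  ultimately have so_explored: "\<forall>m\<in>{1..M}. so m \<inter> ?UE m = {}" by simp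
  have "util M so ?Xh = util M (\<lambda>m. so m - ?UE m) ?Xh"
    using so_explored by (intro util_cong) auto
  also have "\<dots> \<le> util M (\<lambda>m. s m - ?UE m) ?Xh"
    using so_explored s by (intro dominates so) auto
  also have "\<dots> = util M s ?Xh"
    using s by (intro util_cong) auto
  finally show ?thesis using so_explored by simp
next
  case False
  then show ?thesis using rule so unfolding cocs_rule_iff Let_def by auto
qed

lemma cocs_round_regret_le:
  assumes rule: "cocs_rule M Nb cost B phi h K t C P s"
    and so: "feasible M Nb cost B t so"
    and Nb: "\<And>m. Nb m t \<subseteq> {1..N}"
    and q: "\<And>n m. n \<in> {1..N} \<Longrightarrow> m \<in> {1..M} \<Longrightarrow> 0 \<le> q n m \<and> q n m \<le> 1"
  shows "util M so q - util M s q \<le>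
     real N * of_bool (\<exists>m\<in>{1..M}. s m \<inter> under_explored Nb phi h K t C m \<noteq> {})
     + 2 / real M * (\<Sum>m=1..M. \<Sum>n=1..N. \<bar>P n m (square h (phi n m t)) - q n m\<bar> *
           of_bool (K (real t) < real (C n m (square h (phi n m t)))))"
proof -
  let ?UE = "under_explored Nb phi h K t C" and ?Xh = "\<lambda>n m. P n m (square h (phi n m t))"
  define e where "e n m = \<bar>P n m (square h (phi n m t)) - q n m\<bar> *
           of_bool (K (real t) < real (C n m (square h (phi n m t))))" for n m
  have s: "feasible M Nb cost B t s" using rule unfolding cocs_rule_def Let_def by simp
  have sub: "d m \<subseteq> {1..N}" if "feasible M Nb cost B t d" "m \<in> {1..M}" for d m
    using feasible_subset[OF that] Nb by blast
  have q_sel: "0 \<le> q n m \<and> q n m \<le> 1" if "feasible M Nb cost B t d" "m \<in> {1..M}" "n \<in> d m" for d n m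
    using sub[OF that(1,2)] q that(2,3) by auto
  have e_nonneg: "0 \<le> 2 / real M * (\<Sum>m=1..M. \<Sum>n=1..N. e n m)"
    unfolding e_def by (intro mult_nonneg_nonneg sum_nonneg) auto
  have "util M so q - util M s q \<le> real N * of_bool (\<exists>m\<in>{1..M}. s m \<inter> ?UE m \<noteq> {})
      + 2 / real M * (\<Sum>m=1..M. \<Sum>n=1..N. e n m)"
  proof (cases "\<exists>m\<in>{1..M}. s m \<inter> ?UE m \<noteq> {}")
    case True
    have "util M so q \<le> real N" using sub[OF so] q_sel[OF so] by (intro util_le) auto
    moreover have "0 \<le> util M s q" using q_sel[OF s] by (intro util_nonneg) auto
    ultimately show ?thesis using True e_nonneg by simp
  next
    case False
    have estimate: "\<bar>util M d ?Xh - util M d q\<bar> \<le> 1 / real M * (\<Sum>m=1..M. \<Sum>n=1..N. e n m)"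
      if d: "feasible M Nb cost B t d" and explored: "\<forall>m\<in>{1..M}. d m \<inter> ?UE m = {}" for d
    proof (rule abs_util_diff_le[OF sub[OF d]])
      fix n m assume m: "m \<in> {1..M}" and n: "n \<in> d m"
      then have "n \<in> Nb m t" "n \<notin> ?UE m" using feasible_subset[OF d m] explored by auto
      then show "\<bar>?Xh n m - q n m\<bar> \<le> e n m" unfolding e_def under_explored_def by auto
    qed (auto simp: e_def)
    have "(\<forall>m\<in>{1..M}. so m \<inter> ?UE m = {}) \<and> util M so ?Xh \<le> util M s ?Xh"
      using rule so False finite_subset[OF Nb] by (intro cocs_rule_explored_dominates) auto
    then show ?thesis using estimate[OF so] estimate[OF s] False by auto
  qed
  then show ?thesis by (simp only: e_def)
qed

lemma util_eq_0_if_budget_exceeded: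
  assumes s: "feasible M Nb cost B t s" and Nb: "\<And>m. finite (Nb m t)"
    and cost: "\<And>n. 0 \<le> cost n t" and B: "\<And>m n. m \<in> {1..M} \<Longrightarrow> n \<in> Nb m t \<Longrightarrow> B < cost n t"
  shows "util M s q = 0"
proof -
  have "s m = {}" if m: "m \<in> {1..M}" for m
  proof (rule ccontr)
    assume "s m \<noteq> {}"
    then obtain n where n: "n \<in> s m" by auto
    have "finite (s m)" using feasible_subset[OF s m] Nb by (rule finite_subset)
    then have "cost n t \<le> (\<Sum>n'\<in>s m. cost n' t)" using n cost by (intro member_le_sum) auto
    also have "\<dots> \<le> B" using s m unfolding feasible_def by auto
    finally show False using B[OF m] feasible_subset[OF s m] n by force
  qed
  then show ?thesis unfolding util_def by simp
qed

section \<open>Discretisation of the context space\<close>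

lemma cell_less: "h \<ge> 1 \<Longrightarrow> cell h x < h"
  unfolding cell_def by linarith

lemma cell_bounds:
  assumes h: "h \<ge> 1" and x: "0 \<le> x" "x \<le> 1"
  shows "real (cell h x) \<le> x * real h \<and> x * real h \<le> real (cell h x) + 1"
proof (cases "nat \<lfloor>x * real h\<rfloor> \<le> h - 1")
  case True
  then have "cell h x = nat \<lfloor>x * real h\<rfloor>" unfolding cell_def by simp
  moreover have "0 \<le> x * real h" using x by simp
  ultimately show ?thesis by linarith
next
  case False
  then have "cell h x = h - 1" unfolding cell_def by simp
  moreover have "x * real h \<le> real h" using x h by (simp add: mult_le_cancel_right1)
  moreover have "real h - 1 \<le> x * real h" using False h by linarith
  ultimately show ?thesis using h by (simp add: of_nat_diff)
qed

lemma abs_diff_le_same_cell: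
  assumes h: "h \<ge> 1" and x: "x \<in> {0..1}" "x' \<in> {0..1}" and c: "cell h x = cell h x'"
  shows "\<bar>x - x'\<bar> \<le> 1 / real h"
proof -
  have "\<bar>x * real h - x' * real h\<bar> \<le> 1"
    using cell_bounds[OF h, of x] cell_bounds[OF h, of x'] x c by auto
  then have "\<bar>x - x'\<bar> * real h \<le> 1" by (simp add: left_diff_distrib[symmetric] abs_mult)
  then show ?thesis using h by (simp add: le_divide_eq)
qed

lemma norm_diff_le_same_square:
  assumes h: "h \<ge> 1" and x: "x \<in> Phi" and x': "x' \<in> Phi" and sq: "square h x = square h x'"
  shows "norm (x - x') \<le> sqrt 2 / real h"
proof -
  have "\<bar>fst x - fst x'\<bar> \<le> 1 / real h" "\<bar>snd x - snd x'\<bar> \<le> 1 / real h"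
    using x x' sq h by (auto simp: Phi_def square_def mem_Times_iff intro!: abs_diff_le_same_cell)
  then have "(fst x - fst x')\<^sup>2 + (snd x - snd x')\<^sup>2 \<le> 2 * (1 / real h)\<^sup>2"
    using power_mono[of "\<bar>fst x - fst x'\<bar>" "1 / real h" 2] power_mono[of "\<bar>snd x - snd x'\<bar>" "1 / real h" 2]
    by simp
  then have "sqrt ((fst x - fst x')\<^sup>2 + (snd x - snd x')\<^sup>2) \<le> sqrt (2 * (1 / real h)\<^sup>2)"
    by (rule real_sqrt_le_mono)
  also have "\<dots> = sqrt 2 / real h"
    by (simp add: real_sqrt_mult)
  finally show ?thesis by (cases x, cases x') (simp add: norm_Pair)
qed

lemma holder_same_square:
  fixes L \<alpha> :: real
  assumes h: "h \<ge> 1" and x: "x \<in> Phi" and x': "x' \<in> Phi" and sq: "square h x = square h x'"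
    and L: "L > 0" and \<alpha>: "\<alpha> > 0"
    and holder: "\<bar>q x - q x'\<bar> \<le> L * norm (x - x') powr \<alpha>"
  shows "\<bar>q x - q x'\<bar> \<le> L * 2 powr (\<alpha> / 2) * real h powr (- \<alpha>)"
proof -
  have "norm (x - x') powr \<alpha> \<le> (sqrt 2 / real h) powr \<alpha>"
    using norm_diff_le_same_square[OF h x x' sq] \<alpha> by (intro powr_mono2) auto
  also have "\<dots> = 2 powr (\<alpha> / 2) * real h powr (- \<alpha>)"
    using h by (simp add: powr_divide powr_minus_divide powr_half_sqrt[symmetric] powr_powr)
  finally show ?thesis using holder L by (simp add: mult_left_mono order_trans)
qed

section \<open>Regret of COCS\<close>

locale cocs_run =
  fixes N M T :: nat
    and Nb :: "nat \<Rightarrow> nat \<Rightarrow> nat set" and cost :: "nat \<Rightarrow> nat \<Rightarrow> real" and B :: real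
    and phi :: contexts and p :: "nat \<Rightarrow> nat \<Rightarrow> real \<times> real \<Rightarrow> real"
    and h :: nat and K :: "real \<Rightarrow> real" and z b :: real
    and sel :: selection
  assumes M: "M \<ge> 1" and h: "h \<ge> 1"
    and Nb: "\<And>m t. Nb m t \<subseteq> {1..N}"
    and phi: "\<And>n m t. phi n m t \<in> Phi"
    and p: "\<And>n m x. x \<in> Phi \<Longrightarrow> p n m x \<in> {0..1}"
    and K: "K = (\<lambda>t. t powr z * ln t)" and z: "z > 0"
    and b: "b \<ge> 0"
    and bias: "\<And>n m i t. n \<in> {1..N} \<Longrightarrow> m \<in> {1..M} \<Longrightarrow> i \<in> {1..T} \<Longrightarrow> t \<in> {1..T} \<Longrightarrow>
      square h (phi n m i) = square h (phi n m t) \<Longrightarrow> \<bar>p n m (phi n m i) - p n m (phi n m t)\<bar> \<le> b"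
    and policy: "\<And>t C P. t \<in> {1..T} \<Longrightarrow> cocs_rule M Nb cost B phi h K t C P (sel t C P)"
begin

abbreviation mu :: "nat \<Rightarrow> nat \<Rightarrow> nat \<Rightarrow> real" where
  "mu t n m \<equiv> p n m (phi n m t)"

abbreviation E :: "(outcome \<Rightarrow> real) \<Rightarrow> real" where
  "E \<equiv> measure_pmf.expectation (outcome_pmf N M T p phi)"

abbreviation dec :: "nat \<Rightarrow> outcome \<Rightarrow> decision" where
  "dec t \<omega> \<equiv> policy_dec sel phi h \<omega> t"

abbreviation counters :: "nat \<Rightarrow> outcome \<Rightarrow> nat \<Rightarrow> nat \<Rightarrow> nat \<times> nat \<Rightarrow> nat" where
  "counters t \<omega> \<equiv> counter phi h (history sel phi h \<omega> (t - 1))"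

definition explores :: "nat \<Rightarrow> outcome \<Rightarrow> bool" where
  "explores t \<omega> \<longleftrightarrow> (\<exists>m\<in>{1..M}. dec t \<omega> m \<inter> under_explored Nb phi h K t (counters t \<omega>) m \<noteq> {})"

lemma mu_range: "0 \<le> mu t n m \<and> mu t n m \<le> 1"
  using p[OF phi] by simp

lemma outcome_pmf_eq:
  "outcome_pmf N M T p phi = Pi_pmf ({1..T} \<times> {1..N} \<times> {1..M}) False (\<lambda>(t, n, m). bernoulli_pmf (mu t n m))"
  unfolding outcome_pmf_def ..

lemma cocs_rule_dec:
  "t \<in> {1..T} \<Longrightarrow> cocs_rule M Nb cost B phi h K t (counters t \<omega>)
     (estimate phi h \<omega> (history sel phi h \<omega> (t - 1))) (dec t \<omega>)"
  unfolding policy_dec_def by (rule policy)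

lemma feasible_dec: "t \<in> {1..T} \<Longrightarrow> feasible M Nb cost B t (dec t \<omega>)"
  using cocs_rule_dec unfolding cocs_rule_def Let_def by blast

lemma expectation_util_Xvec:
  assumes t: "t \<in> {1..T}"
    and S: "\<And>\<omega> n m y. S (fun_upd \<omega> (t, n, m) y) = S \<omega>"
    and S_sub: "\<And>\<omega> m. m \<in> {1..M} \<Longrightarrow> S \<omega> m \<subseteq> {1..N}"
  shows "E (\<lambda>\<omega>. util M (S \<omega>) (Xvec \<omega> t)) = E (\<lambda>\<omega>. util M (S \<omega>) (mu t))"
proof -
  have fin: "finite ({1..T} \<times> {1..N} \<times> {1..M})" by simp
  have pair: "E (\<lambda>\<omega>. of_bool (n \<in> S \<omega> m) * of_bool (\<omega> (t, n, m))) = E (\<lambda>\<omega>. of_bool (n \<in> S \<omega> m) * mu t n m)"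
    if "n \<in> {1..N}" "m \<in> {1..M}" for n m
    unfolding outcome_pmf_eq using t that
    by (subst expectation_Pi_pmf_mult_bernoulli[where q = "mu t n m"]) (simp_all add: S mu_range)
  have "E (\<lambda>\<omega>. util M (S \<omega>) (Xvec \<omega> t))
      = E (\<lambda>\<omega>. 1 / real M * (\<Sum>m=1..M. \<Sum>n=1..N. of_bool (n \<in> S \<omega> m) * of_bool (\<omega> (t, n, m))))"
    unfolding Xvec_def by (intro Bochner_Integration.integral_cong refl util_eq_sum_indicator S_sub)
  also have "\<dots> = 1 / real M * (\<Sum>m=1..M. \<Sum>n=1..N. E (\<lambda>\<omega>. of_bool (n \<in> S \<omega> m) * of_bool (\<omega> (t, n, m))))"
    unfolding outcome_pmf_eq using fin
    by (simp only: integral_mult_right_zero Bochner_Integration.integral_sum integrable_Pi_pmf)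
  also have "\<dots> = 1 / real M * (\<Sum>m=1..M. \<Sum>n=1..N. E (\<lambda>\<omega>. of_bool (n \<in> S \<omega> m) * mu t n m))"
    using pair by simp
  also have "\<dots> = E (\<lambda>\<omega>. 1 / real M * (\<Sum>m=1..M. \<Sum>n=1..N. of_bool (n \<in> S \<omega> m) * mu t n m))"
    unfolding outcome_pmf_eq using fin
    by (simp only: integral_mult_right_zero Bochner_Integration.integral_sum integrable_Pi_pmf)
  also have "\<dots> = E (\<lambda>\<omega>. util M (S \<omega>) (mu t))"
    by (intro Bochner_Integration.integral_cong refl util_eq_sum_indicator[symmetric] S_sub)
  finally show ?thesis .
qed

lemma expected_round_regret_eq:
  assumes t: "t \<in> {1..T}" and so: "feasible M Nb cost B t so"
  shows "E (\<lambda>\<omega>. util M so (Xvec \<omega> t)) - E (\<lambda>\<omega>. util M (dec t \<omega>) (Xvec \<omega> t))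
       = E (\<lambda>\<omega>. util M so (mu t) - util M (dec t \<omega>) (mu t))"
proof -
  have "E (\<lambda>\<omega>. util M so (Xvec \<omega> t)) = E (\<lambda>\<omega>. util M so (mu t))"
    using t feasible_subset[OF so] Nb by (intro expectation_util_Xvec) blast+
  moreover have "dec t \<omega> m \<subseteq> {1..N}" if "m \<in> {1..M}" for \<omega> m
    using feasible_subset[OF feasible_dec[OF t] that] Nb by blast
  then have "E (\<lambda>\<omega>. util M (dec t \<omega>) (Xvec \<omega> t)) = E (\<lambda>\<omega>. util M (dec t \<omega>) (mu t))"
    using t by (intro expectation_util_Xvec) (auto simp: policy_dec_fun_upd)
  ultimately show ?thesis
    by (simp add: outcome_pmf_def Bochner_Integration.integral_diff)
qed

lemma expected_round_regret_le:
  assumes t: "t \<in> {1..T}" and so: "feasible M Nb cost B t so"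
  shows "E (\<lambda>\<omega>. util M so (mu t) - util M (dec t \<omega>) (mu t))
    \<le> real N * E (\<lambda>\<omega>. of_bool (explores t \<omega>)) + 2 * real N * (real t powr (- z / 2) + b)"
proof -
  have fin: "finite ({1..T} \<times> {1..N} \<times> {1..M})" by simp
  define err where "err \<omega> m n = \<bar>estimate phi h \<omega> (history sel phi h \<omega> (t - 1)) n m (square h (phi n m t)) - mu t n m\<bar> *
      of_bool (K (real t) < real (counters t \<omega> n m (square h (phi n m t))))" for \<omega> m n
  have "util M so (mu t) - util M (dec t \<omega>) (mu t)
      \<le> real N * of_bool (explores t \<omega>) + 2 / real M * (\<Sum>m\<in>{1..M}. \<Sum>n\<in>{1..N}. err \<omega> m n)" for \<omega>
    unfolding explores_def err_def using mu_range
    by (intro cocs_round_regret_le[OF cocs_rule_dec[OF t] so Nb]) auto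
  then have "E (\<lambda>\<omega>. util M so (mu t) - util M (dec t \<omega>) (mu t))
      \<le> E (\<lambda>\<omega>. real N * of_bool (explores t \<omega>) + 2 / real M * (\<Sum>m\<in>{1..M}. \<Sum>n\<in>{1..N}. err \<omega> m n))"
    unfolding outcome_pmf_eq using fin by (intro integral_mono integrable_Pi_pmf)
  also have "\<dots> = real N * E (\<lambda>\<omega>. of_bool (explores t \<omega>))
      + 2 / real M * (\<Sum>m\<in>{1..M}. \<Sum>n\<in>{1..N}. E (\<lambda>\<omega>. err \<omega> m n))"
    unfolding outcome_pmf_eq using fin
    by (simp only: Bochner_Integration.integral_add integral_mult_right_zero
        Bochner_Integration.integral_sum integrable_Pi_pmf)
  also have "\<dots> \<le> real N * E (\<lambda>\<omega>. of_bool (explores t \<omega>))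
      + 2 / real M * (\<Sum>m\<in>{1..M}. \<Sum>n\<in>{1..N}. real t powr (- z / 2) + b)"
  proof -
    have "E (\<lambda>\<omega>. err \<omega> m n) \<le> real t powr (- z / 2) + b" if "m \<in> {1..M}" "n \<in> {1..N}" for m n
      unfolding outcome_pmf_eq err_def K
      by (rule expectation_explored_error_le[OF fin _ _ _ t _ b z])
         (use that t in \<open>auto simp: mu_range intro: bias\<close>)
    then show ?thesis by (intro add_left_mono mult_left_mono sum_mono) auto
  qed
  also have "2 / real M * (\<Sum>m\<in>{1..M}. \<Sum>n\<in>{1..N}. real t powr (- z / 2) + b)
      = 2 * real N * (real t powr (- z / 2) + b)"
    using M by simp
  finally show ?thesis .
qed

lemma K_mono: "t \<in> {1..T} \<Longrightarrow> K (real t) \<le> K (real T)"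
  unfolding K using z by (intro mult_mono powr_mono2) auto

lemma card_explores_le: "card {t \<in> {1..T}. explores t \<omega>} \<le> N * M * (h * h) * (nat \<lfloor>K (real T)\<rfloor> + 1)"
proof -
  define D where "D = {t \<in> {1..T}. explores t \<omega>}"
  define witness where "witness t nm \<longleftrightarrow> snd nm \<in> {1..M} \<and>
      fst nm \<in> dec t \<omega> (snd nm) \<inter> under_explored Nb phi h K t (counters t \<omega>) (snd nm)" for t nm
  have "\<forall>t\<in>D. \<exists>nm. witness t nm" unfolding D_def explores_def witness_def by fastforce
  then obtain w where w: "\<And>t. t \<in> D \<Longrightarrow> witness t (w t)" by metis
  define code where "code t = (let n = fst (w t); m = snd (w t); l = square h (phi n m t) in
      (n, m, l, counters t \<omega> n m l))" for t
  define codes where "codes = {1..N} \<times> {1..M} \<times> ({..<h} \<times> {..<h}) \<times> {..nat \<lfloor>K (real T)\<rfloor>}"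
  have "code ` D \<subseteq> codes"
  proof
    fix x assume "x \<in> code ` D"
    then obtain t where t: "t \<in> D" and x: "x = code t" by auto
    then have "t \<in> {1..T}" by (simp add: D_def)
    then have "real (counters t \<omega> (fst (w t)) (snd (w t)) (square h (phi (fst (w t)) (snd (w t)) t))) \<le> K (real T)"
      using w[OF t] K_mono unfolding witness_def under_explored_def by fastforce
    then have "counters t \<omega> (fst (w t)) (snd (w t)) (square h (phi (fst (w t)) (snd (w t)) t)) \<le> nat \<lfloor>K (real T)\<rfloor>"
      by linarith
    moreover have "fst (w t) \<in> {1..N}" using w[OF t] Nb unfolding witness_def under_explored_def by blast
    ultimately show "x \<in> codes"
      using w[OF t] h unfolding x code_def codes_def witness_def square_def by (auto simp: cell_less Let_def)
  qed
  moreover have "inj_on code D"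
  proof (rule linorder_inj_onI')
    fix t t' assume t: "t \<in> D" and "t' \<in> D" and "t < t'"
    have "counters t \<omega> (fst (w t)) (snd (w t)) (square h (phi (fst (w t)) (snd (w t)) t))
        < counters t' \<omega> (fst (w t)) (snd (w t)) (square h (phi (fst (w t)) (snd (w t)) t))"
      using w[OF t] t \<open>t < t'\<close> unfolding D_def witness_def by (intro counter_history_less) auto
    then show "code t \<noteq> code t'" unfolding code_def Let_def by auto
  qed
  ultimately have "card D \<le> card codes"
    using card_image card_mono[of codes "code ` D"] by (fastforce simp: codes_def)
  also have "card codes = N * M * (h * h) * (nat \<lfloor>K (real T)\<rfloor> + 1)"
    unfolding codes_def by (simp add: card_cartesian_product algebra_simps)
  finally show ?thesis unfolding D_def .
qed

lemma expected_regret_le: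
  assumes so: "\<And>t. t \<in> {1..T} \<Longrightarrow> feasible M Nb cost B t (so t)"
  shows "(\<Sum>t=1..T. E (\<lambda>\<omega>. util M (so t) (Xvec \<omega> t)) - E (\<lambda>\<omega>. util M (dec t \<omega>) (Xvec \<omega> t)))
    \<le> real N * real (N * M * (h * h) * (nat \<lfloor>K (real T)\<rfloor> + 1))
      + (\<Sum>t=1..T. 2 * real N * (real t powr (- z / 2) + b))"
proof -
  have fin: "finite ({1..T} \<times> {1..N} \<times> {1..M})" by simp
  have "(\<Sum>t=1..T. E (\<lambda>\<omega>. util M (so t) (Xvec \<omega> t)) - E (\<lambda>\<omega>. util M (dec t \<omega>) (Xvec \<omega> t)))
      = (\<Sum>t=1..T. E (\<lambda>\<omega>. util M (so t) (mu t) - util M (dec t \<omega>) (mu t)))"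
    using so by (intro sum.cong refl expected_round_regret_eq)
  also have "\<dots> \<le> (\<Sum>t=1..T. real N * E (\<lambda>\<omega>. of_bool (explores t \<omega>)) + 2 * real N * (real t powr (- z / 2) + b))"
    using so by (intro sum_mono expected_round_regret_le)
  also have "\<dots> = real N * E (\<lambda>\<omega>. real (card {t \<in> {1..T}. explores t \<omega>}))
      + (\<Sum>t=1..T. 2 * real N * (real t powr (- z / 2) + b))"
  proof -
    have "(\<Sum>t=1..T. E (\<lambda>\<omega>. of_bool (explores t \<omega>))) = E (\<lambda>\<omega>. \<Sum>t=1..T. of_bool (explores t \<omega>))"
      unfolding outcome_pmf_eq using fin by (simp only: Bochner_Integration.integral_sum integrable_Pi_pmf)
    also have "\<dots> = E (\<lambda>\<omega>. real (card {t \<in> {1..T}. explores t \<omega>}))"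
      by (simp add: Int_def conj_commute)
    finally show ?thesis by (simp add: sum.distrib flip: sum_distrib_left)
  qed
  finally have "(\<Sum>t=1..T. E (\<lambda>\<omega>. util M (so t) (Xvec \<omega> t)) - E (\<lambda>\<omega>. util M (dec t \<omega>) (Xvec \<omega> t)))
      \<le> real N * E (\<lambda>\<omega>. real (card {t \<in> {1..T}. explores t \<omega>}))
        + (\<Sum>t=1..T. 2 * real N * (real t powr (- z / 2) + b))" .
  moreover have "E (\<lambda>\<omega>. real (card {t \<in> {1..T}. explores t \<omega>}))
      \<le> E (\<lambda>_. real (N * M * (h * h) * (nat \<lfloor>K (real T)\<rfloor> + 1)))"
    unfolding outcome_pmf_eq using fin
    by (intro integral_mono integrable_Pi_pmf) (simp_all only: of_nat_le_iff card_explores_le)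
  ultimately show ?thesis using mult_left_mono[of _ _ "real N"] by fastforce
qed


lemma regret_eq_0_if_budget_exceeded:
  assumes so: "\<And>t. t \<in> {1..T} \<Longrightarrow> feasible M Nb cost B t (so t)"
    and cost: "\<And>n t. 0 \<le> cost n t" and exceeded: "\<And>n t. n \<in> {1..N} \<Longrightarrow> t \<in> {1..T} \<Longrightarrow> B < cost n t"
  shows "(\<Sum>t=1..T. E (\<lambda>\<omega>. util M (so t) (Xvec \<omega> t)) - E (\<lambda>\<omega>. util M (dec t \<omega>) (Xvec \<omega> t))) = 0"
proof -
  have "util M (so t) q = 0" "util M (dec t \<omega>) q = 0" if t: "t \<in> {1..T}" for t q \<omega>
  proof -
    have "B < cost n t" if "n \<in> Nb m t" for m n using exceeded[OF subsetD[OF Nb that] t] .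
    then show "util M (so t) q = 0" "util M (dec t \<omega>) q = 0"
      using so[OF t] feasible_dec[OF t] finite_subset[OF Nb] cost
      by (auto intro!: util_eq_0_if_budget_exceeded)
  qed
  then show ?thesis by simp
qed
end

lemma sum_powr_le:
  fixes \<theta> :: real
  assumes \<theta>: "-1 < \<theta>" "\<theta> \<le> 0"
  shows "(\<Sum>t=1..T. real t powr \<theta>) \<le> real T powr (1 + \<theta>) / (1 + \<theta>)"
proof (induction T)
  case 0 then show ?case by simp
next
  case (Suc T)
  show ?case
  proof (cases "T = 0")
    case True
    then show ?thesis using \<theta> by (simp add: le_divide_eq)
  next
    case False
    have "\<exists>\<xi>>real T. \<xi> < real (Suc T) \<and> real (Suc T) powr (1 + \<theta>) - real T powr (1 + \<theta>)
        = (real (Suc T) - real T) * ((1 + \<theta>) * \<xi> powr \<theta>)"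
    proof (rule MVT2)
      fix x assume "real T \<le> x"
      then have "x > 0" using False by linarith
      then show "((\<lambda>x. x powr (1 + \<theta>)) has_real_derivative (1 + \<theta>) * x powr \<theta>) (at x)"
        using has_real_derivative_powr[of x "1 + \<theta>"] by simp
    qed simp
    then obtain \<xi> where \<xi>: "real T < \<xi>" "\<xi> < real (Suc T)"
      and mvt: "real (Suc T) powr (1 + \<theta>) - real T powr (1 + \<theta>) = (1 + \<theta>) * \<xi> powr \<theta>"
      by auto
    have "real (Suc T) powr \<theta> \<le> \<xi> powr \<theta>"
      using \<xi> \<theta> False by (intro powr_mono2') auto
    also have "\<dots> = real (Suc T) powr (1 + \<theta>) / (1 + \<theta>) - real T powr (1 + \<theta>) / (1 + \<theta>)"
      using mvt \<theta> by (simp add: diff_divide_distrib[symmetric])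
    finally show ?thesis using Suc.IH by simp
  qed
qed

lemma nat_ceiling_powr_bounds:
  fixes \<gamma> :: real
  assumes T: "T \<ge> 1" and \<gamma>: "\<gamma> \<ge> 0"
  shows "1 \<le> nat \<lceil>real T powr \<gamma>\<rceil>" "real (nat \<lceil>real T powr \<gamma>\<rceil>) \<le> 2 * real T powr \<gamma>"
proof -
  have "1 \<le> real T powr \<gamma>" using T \<gamma> by (simp add: ge_one_powr_ge_zero)
  then show "1 \<le> nat \<lceil>real T powr \<gamma>\<rceil>" "real (nat \<lceil>real T powr \<gamma>\<rceil>) \<le> 2 * real T powr \<gamma>"
    by linarith+
qed

lemma exploration_term_le:
  fixes z \<gamma> r :: real
  assumes T: "T \<ge> 1" and r: "r \<ge> 1" and h: "real h \<le> 2 * real T powr \<gamma>"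
  shows "real N * real (N * M * (h * h) * (nat \<lfloor>real T powr z * ln (real T)\<rfloor> + 1))
    \<le> 4 * real N ^ 2 * real M * r * (real T powr (z + 2 * \<gamma>) * ln (real T) + real T powr (2 * \<gamma>))"
proof -
  define x where "x = real T powr z * ln (real T)"
  have ln: "0 \<le> ln (real T)" using T by simp
  have "real h * real h \<le> 4 * real T powr (2 * \<gamma>)"
    using mult_mono[OF h h] by (simp add: powr_add[symmetric])
  then have "real N * real M * (real h * real h) \<le> real N * real M * (4 * real T powr (2 * \<gamma>))"
    by (rule mult_left_mono) simp
  moreover have "real (nat \<lfloor>x\<rfloor>) + 1 \<le> x + 1"
    using ln by (simp add: x_def of_nat_nat)
  ultimately have "real N * real M * (real h * real h) * (real (nat \<lfloor>x\<rfloor>) + 1)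
      \<le> real N * real M * (4 * real T powr (2 * \<gamma>)) * (x + 1)"
    by (rule mult_mono) auto
  then have "real (N * M * (h * h) * (nat \<lfloor>x\<rfloor> + 1))
      \<le> real N * real M * (4 * real T powr (2 * \<gamma>)) * (real T powr z * ln (real T) + 1)"
    by (simp only: x_def of_nat_mult of_nat_add of_nat_1)
  also have "\<dots> = 4 * real N * real M * (real T powr (z + 2 * \<gamma>) * ln (real T) + real T powr (2 * \<gamma>))"
    by (simp add: powr_add algebra_simps)
  also have "\<dots> \<le> 4 * real N * real M * r * (real T powr (z + 2 * \<gamma>) * ln (real T) + real T powr (2 * \<gamma>))"
  proof -
    have "0 \<le> 4 * real N * real M * (real T powr (z + 2 * \<gamma>) * ln (real T) + real T powr (2 * \<gamma>))"
      using ln by simp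
    from mult_left_mono[OF r this] show ?thesis by (simp add: ac_simps)
  qed
  finally have "real (N * M * (h * h) * (nat \<lfloor>x\<rfloor> + 1))
      \<le> 4 * real N * real M * r * (real T powr (z + 2 * \<gamma>) * ln (real T) + real T powr (2 * \<gamma>))"
    unfolding x_def .
  from mult_left_mono[OF this, of "real N"] show ?thesis
    unfolding x_def by (simp add: power2_eq_square ac_simps)
qed

lemma estimation_term_le:
  fixes z b r A \<theta> :: real and H :: "nat \<Rightarrow> real"
  assumes M: "1 \<le> M" and r: "1 \<le> r" and b: "0 \<le> b" and A: "0 \<le> A" and \<theta>: "-1 < \<theta>" "\<theta> \<le> 0"
    and H: "\<And>t. t \<in> {1..T} \<Longrightarrow> real N * real M * r * real t powr (- z / 2) < H t"
    and HA: "\<And>t. t \<in> {1..T} \<Longrightarrow> 2 * H t + 2 * (real N * real M * r) * b \<le> A * real t powr \<theta>"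
  shows "(\<Sum>t=1..T. 2 * real N * (real t powr (- z / 2) + b)) \<le> A / (1 + \<theta>) * real T powr (1 + \<theta>)"
proof -
  have "1 \<le> real M * r" using mult_mono[of 1 "real M" 1 r] M r by simp
  from mult_left_mono[OF this, of "real N"] have N: "real N \<le> real N * real M * r" by (simp add: ac_simps)
  have each: "2 * real N * (real t powr (- z / 2) + b) \<le> A * real t powr \<theta>" if t: "t \<in> {1..T}" for t
  proof -
    have "real N * real t powr (- z / 2) \<le> real N * real M * r * real t powr (- z / 2)"
      "real N * b \<le> real N * real M * r * b"
      using N b by (simp_all add: mult_right_mono)
    then show ?thesis using H[OF t] HA[OF t] by (simp add: algebra_simps)
  qed
  have "(\<Sum>t=1..T. 2 * real N * (real t powr (- z / 2) + b)) \<le> (\<Sum>t=1..T. A * real t powr \<theta>)"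
    by (rule sum_mono) (rule each)
  also have "\<dots> = A * (\<Sum>t=1..T. real t powr \<theta>)" by (simp add: sum_distrib_left)
  also have "\<dots> \<le> A * (real T powr (1 + \<theta>) / (1 + \<theta>))"
    using A \<theta> by (intro mult_left_mono sum_powr_le) auto
  finally show ?thesis by simp
qed

lemma min_cost_bounds:
  fixes c :: "nat \<Rightarrow> nat \<Rightarrow> real"
  assumes N: "N \<ge> 1" and T: "T \<ge> 1" and c: "\<And>n t. 0 < c n t"
  shows "0 < Min {c n t | n t. n \<in> {1..N} \<and> t \<in> {1..T}}"
    and "n \<in> {1..N} \<Longrightarrow> t \<in> {1..T} \<Longrightarrow> Min {c n t | n t. n \<in> {1..N} \<and> t \<in> {1..T}} \<le> c n t"
proof -
  have grid: "{c n t | n t. n \<in> {1..N} \<and> t \<in> {1..T}} = (\<lambda>(n, t). c n t) ` ({1..N} \<times> {1..T})"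
    by fastforce
  have fin: "finite ((\<lambda>(n, t). c n t) ` ({1..N} \<times> {1..T}))" by simp
  have "Min ((\<lambda>(n, t). c n t) ` ({1..N} \<times> {1..T})) \<in> (\<lambda>(n, t). c n t) ` ({1..N} \<times> {1..T})"
    using N T by (intro Min_in fin) auto
  then show "0 < Min {c n t | n t. n \<in> {1..N} \<and> t \<in> {1..T}}" unfolding grid using c by auto
  show "n \<in> {1..N} \<Longrightarrow> t \<in> {1..T} \<Longrightarrow> Min {c n t | n t. n \<in> {1..N} \<and> t \<in> {1..T}} \<le> c n t"
    unfolding grid by (intro Min_le fin) auto
qed

theorem theorem1:
  fixes N M T :: nat
    and Nb :: "nat \<Rightarrow> nat \<Rightarrow> nat set"
    and y :: "nat \<Rightarrow> nat \<Rightarrow> real" and cf :: "nat \<Rightarrow> real \<Rightarrow> real"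
    and B :: real
    and phi :: "nat \<Rightarrow> nat \<Rightarrow> nat \<Rightarrow> real \<times> real"
    and p :: "nat \<Rightarrow> nat \<Rightarrow> real \<times> real \<Rightarrow> real"
    and L \<alpha> z \<gamma> A \<theta> :: real
    and H :: "nat \<Rightarrow> real"
    and sopt :: "nat \<Rightarrow> decision"
    and sel :: "nat \<Rightarrow> (nat \<Rightarrow> nat \<Rightarrow> nat \<times> nat \<Rightarrow> nat) \<Rightarrow> (nat \<Rightarrow> nat \<Rightarrow> nat \<times> nat \<Rightarrow> real) \<Rightarrow> decision"
  defines "cost \<equiv> (\<lambda>n t. cf n (y n t))"
    and "cmin \<equiv> Min {cf n (y n t) | n t. n \<in> {1..N} \<and> t \<in> {1..T}}"
    and "hT \<equiv> nat \<lceil>real T powr \<gamma>\<rceil>"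
    and "K \<equiv> (\<lambda>t::real. t powr z * ln t)"
  assumes N: "N \<ge> 1" and M: "M \<ge> 1" and T: "T \<ge> 1"
    and B: "B > 0"
    and Nb: "\<forall>m t. Nb m t \<subseteq> {1..N}"
    and cf_mono: "\<forall>n. mono (cf n)"
    and cost_pos: "\<forall>n t. cf n (y n t) > 0"
    and phi: "\<forall>n m t. phi n m t \<in> Phi"
    and p_range: "\<forall>n m \<phi>. \<phi> \<in> Phi \<longrightarrow> p n m \<phi> \<in> {0..1}"
    and L: "L > 0" and \<alpha>: "\<alpha> > 0"
    and holder: "\<forall>n\<in>{1..N}. \<forall>m\<in>{1..M}. \<forall>\<phi>\<in>Phi. \<forall>\<phi>'\<in>Phi.
                   \<bar>p n m \<phi> - p n m \<phi>'\<bar> \<le> L * norm (\<phi> - \<phi>') powr \<alpha>"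
    and z: "0 < z" "z < 1"
    and \<gamma>: "0 < \<gamma>" "\<gamma> < 1/2"
    and H: "\<forall>t\<in>{1..T}. H t > real N * real M * B / cmin * real t powr (- z / 2)"
    and A: "A > 0" and \<theta>: "\<theta> < 0" "-1 < \<theta>"
    and HA: "\<forall>t\<in>{1..T}. 2 * H t + 2 * real N * real M * B / cmin * L * 2 powr (\<alpha> / 2) * real hT powr (- \<alpha>)
                          \<le> A * real t powr \<theta>"
    and sopt: "\<forall>t\<in>{1..T}. feasible M Nb cost B t (sopt t) \<and>
                 (\<forall>s. feasible M Nb cost B t s \<longrightarrow>
                      util M s (\<lambda>n m. p n m (phi n m t)) \<le> util M (sopt t) (\<lambda>n m. p n m (phi n m t)))"
    and policy: "\<forall>t\<in>{1..T}. \<forall>C P. cocs_rule M Nb cost B phi hT K t C P (sel t C P)"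
  shows "(\<Sum>t=1..T.
            measure_pmf.expectation (outcome_pmf N M T p phi) (\<lambda>\<omega>. util M (sopt t) (Xvec \<omega> t))
          - measure_pmf.expectation (outcome_pmf N M T p phi)
              (\<lambda>\<omega>. util M (policy_dec sel phi hT \<omega> t) (Xvec \<omega> t)))
    \<le> 4 * real N ^ 2 * real M * B / cmin * (real T powr (z + 2 * \<gamma>) * ln (real T) + real T powr (2 * \<gamma>))
      + real N * real M * B / cmin * (\<Sum>k=1..nat \<lfloor>B / cmin\<rfloor>. real (N choose k)) * pi ^ 2 / 3
      + 3 * real N * real M * B / cmin * L * 2 powr (\<alpha> / 2) * real T powr (1 - \<gamma> * \<alpha>)
      + A / (1 + \<theta>) * real T powr (1 + \<theta>)"
proof -
  define b where "b = L * 2 powr (\<alpha> / 2) * real hT powr (- \<alpha>)"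
  have cmin: "0 < cmin" and cmin_le: "\<And>n t. n \<in> {1..N} \<Longrightarrow> t \<in> {1..T} \<Longrightarrow> cmin \<le> cost n t"
    unfolding cmin_def cost_def using min_cost_bounds[OF N T, of "\<lambda>n t. cf n (y n t)"] cost_pos by auto
  have hT: "1 \<le> hT" "real hT \<le> 2 * real T powr \<gamma>"
    unfolding hT_def using nat_ceiling_powr_bounds[OF T] \<gamma> by auto
  interpret cocs_run N M T Nb cost B phi p hT K z b sel
  proof
    fix n m i t assume "n \<in> {1..N}" "m \<in> {1..M}" "square hT (phi n m i) = square hT (phi n m t)"
    then show "\<bar>p n m (phi n m i) - p n m (phi n m t)\<bar> \<le> b"
      unfolding b_def using hT(1) phi L \<alpha> holder by (intro holder_same_square) auto
  qed (use M hT Nb phi p_range z L policy in \<open>auto simp: K_def b_def\<close>)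
  have sopt_feasible: "\<And>t. t \<in> {1..T} \<Longrightarrow> feasible M Nb cost B t (sopt t)" using sopt by blast
  have nonneg: "0 \<le> 4 * real N ^ 2 * real M * B / cmin * (real T powr (z + 2 * \<gamma>) * ln (real T) + real T powr (2 * \<gamma>))"
    "0 \<le> real N * real M * B / cmin * (\<Sum>k=1..nat \<lfloor>B / cmin\<rfloor>. real (N choose k)) * pi ^ 2 / 3"
    "0 \<le> 3 * real N * real M * B / cmin * L * 2 powr (\<alpha> / 2) * real T powr (1 - \<gamma> * \<alpha>)"
    "0 \<le> A / (1 + \<theta>) * real T powr (1 + \<theta>)"
    using B cmin L A \<theta> T by (intro mult_nonneg_nonneg divide_nonneg_nonneg sum_nonneg; simp)+
  show ?thesis
  proof (cases "B < cmin")
    case True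
    then have "(\<Sum>t=1..T. E (\<lambda>\<omega>. util M (sopt t) (Xvec \<omega> t)) - E (\<lambda>\<omega>. util M (dec t \<omega>) (Xvec \<omega> t))) = 0"
      using sopt_feasible cost_pos cmin_le
      by (intro regret_eq_0_if_budget_exceeded) (auto simp: cost_def intro: less_imp_le order_less_le_trans)
    then show ?thesis using nonneg by linarith
  next
    case False
    then have r: "1 \<le> B / cmin" using cmin by simp
    have "real N * real (N * M * (hT * hT) * (nat \<lfloor>K (real T)\<rfloor> + 1))
      \<le> 4 * real N ^ 2 * real M * B / cmin * (real T powr (z + 2 * \<gamma>) * ln (real T) + real T powr (2 * \<gamma>))"
      using exploration_term_le[OF T r hT(2), of N M z] unfolding K_def by simp
    moreover have "(\<Sum>t=1..T. 2 * real N * (real t powr (- z / 2) + b)) \<le> A / (1 + \<theta>) * real T powr (1 + \<theta>)"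
      using M r b A \<theta> H HA by (intro estimation_term_le) (auto simp: b_def ac_simps)
    ultimately show ?thesis using expected_regret_le[OF sopt_feasible] nonneg by linarith
  qed
qed

end
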